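(* Let $\phi:\mathbb{R}\to\mathbb{R}_+$ be a non-constant, monotonically increasing function with at most polynomial growth (there exists $\alpha\geq 0$ with $\limsup_{v\to+\infty}\phi(v)/|v|^\alpha<+\infty$), and let $m^\phi:=\left(\int z\phi(z)\mathcal{D}z\right)^{-1}$. Let $X_1,X_2,\dots$ be i.i.d. standard normal random variables and $\mathbf{X}_{1:P}:=(X_1,\dots,X_P)$. Then $$\mathbb{E}\left(m^\phi\int z\,\phi\left(\frac{\|\mathbf{X}_{1:P}\|}{\sqrt{P}}z\right)\mathcal{D}z-\frac{\|\mathbf{X}_{1:P}\|}{\sqrt{P}}\right)^2\xrightarrow[P\to\infty]{}0.$$
   Context: $\mathcal{D}z:=\frac{1}{\sqrt{2\pi}}e^{-z^2/2}\,\mathrm{d}z$ denotes the standard Gaussian measure on $\mathbb{R}$, and $\|\cdot\|$ is the Euclidean norm. *)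

theory Defs
  imports "HOL-Probability.Probability"
begin

definition gauss_int :: "(real \<Rightarrow> real) \<Rightarrow> real" where
  "gauss_int f = (LINT z|lborel. std_normal_density z * f z)"

definition m_phi :: "(real \<Rightarrow> real) \<Rightarrow> real" where
  "m_phi \<phi> = inverse (gauss_int (\<lambda>z. z * \<phi> z))"

end

theory Submission
  imports Defs
begin

(*
  Write h(r) = int z phi(r z) Dz and g(r) = (m^phi h(r) - r)^2, so that the expectation is
  E g(R_P) with R_P = ||X_{1:P}|| / sqrt P.  Since int z Dz = 0, h(1) = int z (phi z - phi 0) Dz,
  whose integrand is nonnegative by monotonicity and not a.e. zero; hence h(1) > 0 and g(1) = 0.
  A monotone phi has only countably many discontinuities, so dominated convergence makes h, and
  hence g, continuous at 1, while the polynomial growth of phi gives g(r) <= K exp(r^2).  So g(R_P)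
  is small where |R_P^2 - 1| < delta, and elsewhere it is dominated by
  exp(c (||X||^2 - P (1 + delta))) + exp(-c (||X||^2 - P (1 - delta))), whose expectation decays
  geometrically in P because E exp(t ||X||^2) = (1 - 2t)^(-P/2).
*)

lemma mono_polynomial_growth_bound:
  fixes \<phi> :: "real \<Rightarrow> real"
  assumes mono: "mono \<phi>" and growth: "eventually (\<lambda>v. \<phi> v / \<bar>v\<bar> powr \<alpha> \<le> C) at_top"
  shows "\<exists>A B n. 0 \<le> B \<and> (\<forall>v. \<phi> v \<le> A + B * v^(2*n))"
proof -
  obtain N where N: "\<And>v. N \<le> v \<Longrightarrow> \<phi> v / \<bar>v\<bar> powr \<alpha> \<le> C"
    using growth by (auto simp: eventually_at_top_linorder)
  define v\<^sub>0 where "v\<^sub>0 = max N 1"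
  define n where "n = nat \<lceil>\<alpha>\<rceil>"
  have "\<alpha> \<le> real (2*n)"
    using real_nat_ceiling_ge[of \<alpha>] by (simp add: n_def)
  have "\<phi> v \<le> \<bar>\<phi> v\<^sub>0\<bar> + \<bar>C\<bar> * v^(2*n)" for v
  proof (cases "v\<^sub>0 \<le> v")
    case True
    then have "1 \<le> v" "N \<le> v" by (auto simp: v\<^sub>0_def)
    then have "\<phi> v \<le> C * v powr \<alpha>"
      using N[of v] by (simp add: divide_le_eq)
    also have "\<dots> \<le> \<bar>C\<bar> * v powr real (2*n)"
      using \<open>1 \<le> v\<close> \<open>\<alpha> \<le> real (2*n)\<close> by (intro mult_mono powr_mono) auto
    also have "\<dots> = \<bar>C\<bar> * v^(2*n)"
      using \<open>1 \<le> v\<close> by (subst powr_realpow) auto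
    finally show ?thesis by simp
  next
    case False
    then have "\<phi> v \<le> \<phi> v\<^sub>0" using mono by (simp add: monoD)
    then show ?thesis by (simp add: add_increasing2 zero_le_even_power)
  qed
  then show ?thesis by (intro exI[of _ "\<bar>\<phi> v\<^sub>0\<bar>"] exI[of _ "\<bar>C\<bar>"] exI[of _ n]) auto
qed

lemma power_le_fact_mult_exp:
  fixes y :: real
  assumes "0 \<le> y"
  shows "y^n \<le> fact n * exp y"
proof -
  have "y^n / fact n \<le> exp y"
    using sum_le_suminf[OF summable_exp_generic[of y], of "{n}"] assms
    by (simp add: exp_def divide_inverse ac_simps)
  then show ?thesis by (simp add: divide_le_eq mult.commute)
qed

lemma le_exp_half_square:
  fixes r :: real
  shows "r \<le> exp (r\<^sup>2 / 2)"
proof -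
  have "r \<le> 1 + r\<^sup>2 / 2"
    using zero_le_power2[of "r - 1"] by (simp add: power2_diff)
  also have "\<dots> \<le> exp (r\<^sup>2 / 2)"
    by (rule exp_ge_add_one_self)
  finally show ?thesis .
qed

lemma exp_lt_one_plus:
  fixes u :: real
  assumes "u \<noteq> 0" and "\<bar>u\<bar> \<le> 1/2"
  shows "exp (u - 4 * u\<^sup>2) < 1 + u"
proof -
  have "\<bar>ln (1 + u) - u\<bar> \<le> 2 * u\<^sup>2"
    using abs_ln_one_plus_x_minus_x_bound_nonneg[of u] abs_ln_one_plus_x_minus_x_bound_nonpos[of u] assms
    by (cases "u \<ge> 0") auto
  moreover have "0 < u\<^sup>2" using assms by simp
  ultimately have "u - 4 * u\<^sup>2 < ln (1 + u)" by linarith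
  then show ?thesis using assms by (subst (asm) exp_less_cancel_iff[symmetric]) simp
qed

abbreviation \<rho> :: "real \<Rightarrow> real" where
  "\<rho> \<equiv> std_normal_density"

lemma gauss_int_mult_mono_pos:
  fixes \<psi> :: "real \<Rightarrow> real"
  assumes mono: "mono \<psi>" and nonconst: "\<exists>x y. \<psi> x \<noteq> \<psi> y"
    and int: "integrable lborel (\<lambda>z. \<rho> z * (z * \<psi> z))"
  shows "0 < gauss_int (\<lambda>z. z * \<psi> z)"
proof -
  define q where "q = (\<lambda>z. \<rho> z * (z * (\<psi> z - \<psi> 0)))"
  have q_nonneg: "0 \<le> q z" for z
    using mono[THEN monoD, of z 0] mono[THEN monoD, of 0 z]
    by (cases "z \<ge> 0") (auto simp: q_def mult_nonpos_nonpos)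
  have odd_moment: "has_bochner_integral lborel (\<lambda>z. \<psi> 0 * (\<rho> z * z)) 0"
    using has_bochner_integral_mult_right[OF std_normal_moment_odd[of 0], of "\<psi> 0"] by simp
  have "has_bochner_integral lborel q (gauss_int (\<lambda>z. z * \<psi> z) - 0)"
    using has_bochner_integral_diff[OF has_bochner_integral_integrable[OF int] odd_moment]
    by (simp add: q_def gauss_int_def algebra_simps)
  then have int_q: "integrable lborel q" and "integral\<^sup>L lborel q = gauss_int (\<lambda>z. z * \<psi> z)"
    by (simp_all add: has_bochner_integral_iff)
  moreover have "integral\<^sup>L lborel q \<noteq> 0"
  proof
    assume "integral\<^sup>L lborel q = 0"
    then have "AE z in lborel. q z = 0"
      using integral_nonneg_eq_0_iff_AE[OF int_q] q_nonneg by simp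
    then obtain N where N: "{z. q z \<noteq> 0} \<subseteq> N" "emeasure lborel N = 0" "N \<in> sets lborel"
      by (rule AE_E) simp
    obtain t where "\<psi> t \<noteq> \<psi> 0" using nonconst by metis
    then obtain a where "{a<..<a+1} \<subseteq> {z. q z \<noteq> 0}"
    proof (cases "t > 0")
      case True
      with \<open>\<psi> t \<noteq> \<psi> 0\<close> have "\<psi> 0 < \<psi> t" using mono[THEN monoD, of 0 t] by simp
      then have "\<psi> z \<noteq> \<psi> 0" if "t < z" for z using that mono[THEN monoD, of t z] by simp
      then have "{t<..<t+1} \<subseteq> {z. q z \<noteq> 0}"
        using True by (auto simp: q_def normal_density_pos[THEN less_imp_neq, symmetric])
      then show thesis by (rule that)
    next
      case False
      with \<open>\<psi> t \<noteq> \<psi> 0\<close> have "t < 0" by (cases "t = 0") auto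
      with \<open>\<psi> t \<noteq> \<psi> 0\<close> have "\<psi> t < \<psi> 0" using mono[THEN monoD, of t 0] by simp
      then have "\<psi> z \<noteq> \<psi> 0" if "z < t" for z using that mono[THEN monoD, of z t] by simp
      with \<open>t < 0\<close> have "{t-1<..<t-1+1} \<subseteq> {z. q z \<noteq> 0}"
        by (auto simp: q_def normal_density_pos[THEN less_imp_neq, symmetric])
      then show thesis by (rule that)
    qed
    then have "emeasure lborel {a<..<a+1} \<le> emeasure lborel N"
      using N by (intro emeasure_mono) auto
    with N show False by simp
  qed
  moreover have "0 \<le> integral\<^sup>L lborel q" using q_nonneg by simp
  ultimately show ?thesis by linarith
qed

lemma has_bochner_integral_std_normal_exp_square:
  fixes t :: real
  assumes "t < 1/2"
  shows "has_bochner_integral lborel (\<lambda>x. \<rho> x * exp (t * x\<^sup>2)) (1 / sqrt (1 - 2*t))"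
proof -
  define \<sigma> where "\<sigma> = 1 / sqrt (1 - 2*t)"
  have "\<sigma> > 0" using assms by (simp add: \<sigma>_def)
  \<comment> \<open>completing the square: \<open>\<rho> x e^{t x\<^sup>2}\<close> is \<open>\<sigma>\<close> times the centred normal density of variance \<open>\<sigma>\<^sup>2\<close>\<close>
  have "\<rho> x * exp (t * x\<^sup>2) = \<sigma> * normal_density 0 \<sigma> x" for x
  proof -
    have "\<sigma>\<^sup>2 = 1 / (1 - 2*t)" using assms by (simp add: \<sigma>_def power_divide)
    then show ?thesis
      using assms \<open>\<sigma> > 0\<close>
      by (simp add: normal_density_def std_normal_density_def exp_add[symmetric] real_sqrt_mult
          real_sqrt_divide \<sigma>_def field_simps)
  qed
  moreover have "has_bochner_integral lborel (normal_density 0 \<sigma>) 1"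
    using integrable_normal_density[OF \<open>\<sigma> > 0\<close>] integral_normal_density[OF \<open>\<sigma> > 0\<close>]
    by (simp add: has_bochner_integral_iff)
  then have "has_bochner_integral lborel (\<lambda>x. \<sigma> * normal_density 0 \<sigma> x) \<sigma>"
    using has_bochner_integral_mult_right[where c=\<sigma> and x=1] by simp
  ultimately show ?thesis
    unfolding \<sigma>_def[symmetric] by simp
qed

lemma (in prob_space) expectation_exp_sum_squares:
  fixes X :: "nat \<Rightarrow> 'a \<Rightarrow> real" and t :: real
  assumes indep: "indep_vars (\<lambda>_. borel) X UNIV"
    and gauss: "\<And>i. distributed M lborel (X i) \<rho>"
    and t: "t < 1/2"
  shows "integrable M (\<lambda>\<omega>. exp (t * (\<Sum>i<P. (X i \<omega>)\<^sup>2)))"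
    and "expectation (\<lambda>\<omega>. exp (t * (\<Sum>i<P. (X i \<omega>)\<^sup>2))) = (1 / sqrt (1 - 2*t))^P"
proof -
  note mgf = has_bochner_integral_std_normal_exp_square[OF t]
  have int: "integrable M (\<lambda>\<omega>. exp (t * (X i \<omega>)\<^sup>2))" for i
    using distributed_integrable[OF gauss[of i], of "\<lambda>x. exp (t * x\<^sup>2)"] mgf
    by (simp add: has_bochner_integral_iff)
  have expectation: "expectation (\<lambda>\<omega>. exp (t * (X i \<omega>)\<^sup>2)) = 1 / sqrt (1 - 2*t)" for i
    using distributed_integral[OF gauss[of i], of "\<lambda>x. exp (t * x\<^sup>2)"] mgf
    by (simp add: has_bochner_integral_iff)
  have indep': "indep_vars (\<lambda>_. borel) (\<lambda>i \<omega>. exp (t * (X i \<omega>)\<^sup>2)) {..<P}"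
    by (rule indep_vars_compose2[OF indep_vars_subset[OF indep]]) auto
  have prod: "exp (t * (\<Sum>i<P. (X i \<omega>)\<^sup>2)) = (\<Prod>i<P. exp (t * (X i \<omega>)\<^sup>2))" for \<omega>
    by (simp add: exp_sum sum_distrib_left)
  show "integrable M (\<lambda>\<omega>. exp (t * (\<Sum>i<P. (X i \<omega>)\<^sup>2)))"
    unfolding prod using int by (intro indep_vars_integrable[OF _ indep']) auto
  show "expectation (\<lambda>\<omega>. exp (t * (\<Sum>i<P. (X i \<omega>)\<^sup>2))) = (1 / sqrt (1 - 2*t))^P"
    unfolding prod using int by (subst indep_vars_lebesgue_integral[OF _ indep']) (auto simp: expectation)
qed

lemma chernoff_rate_lt_one:
  fixes t :: real
  assumes "t \<noteq> 0" and "\<bar>t\<bar> \<le> 1/8"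
  shows "exp (- t - 8 * t\<^sup>2) / sqrt (1 - 2*t) < 1"
proof -
  have "(exp (- t - 8 * t\<^sup>2))\<^sup>2 = exp (- 2*t - 4 * (2*t)\<^sup>2)"
    by (subst exp_double[symmetric], rule arg_cong[where f=exp]) (simp add: power2_eq_square algebra_simps)
  also have "\<dots> < 1 - 2*t"
    using exp_lt_one_plus[of "- 2*t"] assms by simp
  also have "\<dots> = (sqrt (1 - 2*t))\<^sup>2"
    using assms by simp
  finally have "exp (- t - 8 * t\<^sup>2) < sqrt (1 - 2*t)"
    by (rule power2_less_imp_less) (use assms in simp)
  then show ?thesis using assms by (subst divide_less_eq_1_pos) auto
qed

lemma (in prob_space) chernoff_sum_squares:
  fixes X :: "nat \<Rightarrow> 'a \<Rightarrow> real" and t :: real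
  assumes indep: "indep_vars (\<lambda>_. borel) X UNIV"
    and gauss: "\<And>i. distributed M lborel (X i) \<rho>"
    and t: "t \<noteq> 0" "\<bar>t\<bar> \<le> 1/8"
  shows "integrable M (\<lambda>\<omega>. exp (t * ((\<Sum>i<P. (X i \<omega>)\<^sup>2) - P) - 8 * t\<^sup>2 * P))"
    and "(\<lambda>P. expectation (\<lambda>\<omega>. exp (t * ((\<Sum>i<P. (X i \<omega>)\<^sup>2) - P) - 8 * t\<^sup>2 * P))) \<longlonglongrightarrow> 0"
proof -
  have "t < 1/2" using t by linarith
  note mgf = expectation_exp_sum_squares[OF indep gauss this]
  have split: "exp (t * (S - real P) - 8 * t\<^sup>2 * real P) = exp (- t - 8 * t\<^sup>2)^P * exp (t * S)"
    for S :: real and P :: nat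
    by (simp add: exp_of_nat_mult[symmetric] exp_add[symmetric] algebra_simps)
  show "integrable M (\<lambda>\<omega>. exp (t * ((\<Sum>i<P. (X i \<omega>)\<^sup>2) - P) - 8 * t\<^sup>2 * P))"
    unfolding split by (intro integrable_mult_right mgf)
  have "expectation (\<lambda>\<omega>. exp (t * ((\<Sum>i<P. (X i \<omega>)\<^sup>2) - P) - 8 * t\<^sup>2 * P))
      = (exp (- t - 8 * t\<^sup>2) / sqrt (1 - 2*t))^P" for P
    unfolding split by (simp add: mgf power_divide)
  moreover have "(\<lambda>P. (exp (- t - 8 * t\<^sup>2) / sqrt (1 - 2*t))^P) \<longlonglongrightarrow> 0"
    using chernoff_rate_lt_one[OF t] \<open>t < 1/2\<close> by (intro LIMSEQ_power_zero) simp
  ultimately show "(\<lambda>P. expectation (\<lambda>\<omega>. exp (t * ((\<Sum>i<P. (X i \<omega>)\<^sup>2) - P) - 8 * t\<^sup>2 * P))) \<longlonglongrightarrow> 0"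
    by simp
qed

text \<open>The two summands are the Chernoff bounds for the events \<open>y \<ge> P (1 + 8 c)\<close> and
  \<open>y \<le> P (1 - 8 c)\<close>.\<close>
definition chernoff_tails :: "real \<Rightarrow> real \<Rightarrow> real \<Rightarrow> real" where
  "chernoff_tails c P y = exp (c * (y - P) - 8 * c\<^sup>2 * P) + exp (- c * (y - P) - 8 * c\<^sup>2 * P)"

lemma (in prob_space) chernoff_tails_sum_squares:
  fixes X :: "nat \<Rightarrow> 'a \<Rightarrow> real"
  assumes indep: "indep_vars (\<lambda>_. borel) X UNIV"
    and gauss: "\<And>i. distributed M lborel (X i) \<rho>"
    and c: "0 < c" "c \<le> 1/8"
  shows "integrable M (\<lambda>\<omega>. chernoff_tails c P (\<Sum>i<P. (X i \<omega>)\<^sup>2))"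
    and "(\<lambda>P. expectation (\<lambda>\<omega>. chernoff_tails c P (\<Sum>i<P. (X i \<omega>)\<^sup>2))) \<longlonglongrightarrow> 0"
proof -
  have "c \<noteq> 0" "\<bar>c\<bar> \<le> 1/8" "- c \<noteq> 0" "\<bar>- c\<bar> \<le> 1/8" using c by auto
  note upper = chernoff_sum_squares[OF indep gauss this(1,2)]
    and lower = chernoff_sum_squares[OF indep gauss this(3,4), simplified]
  show "integrable M (\<lambda>\<omega>. chernoff_tails c P (\<Sum>i<P. (X i \<omega>)\<^sup>2))" for P
    using upper(1) lower(1) unfolding chernoff_tails_def
    by (intro Bochner_Integration.integrable_add) auto
  moreover have "expectation (\<lambda>\<omega>. chernoff_tails c P (\<Sum>i<P. (X i \<omega>)\<^sup>2))
      = expectation (\<lambda>\<omega>. exp (c * ((\<Sum>i<P. (X i \<omega>)\<^sup>2) - P) - 8 * c\<^sup>2 * P))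
        + expectation (\<lambda>\<omega>. exp (- c * ((\<Sum>i<P. (X i \<omega>)\<^sup>2) - P) - 8 * c\<^sup>2 * P))" for P
    using upper(1) lower(1) unfolding chernoff_tails_def
    by (intro Bochner_Integration.integral_add) auto
  ultimately show "(\<lambda>P. expectation (\<lambda>\<omega>. chernoff_tails c P (\<Sum>i<P. (X i \<omega>)\<^sup>2))) \<longlonglongrightarrow> 0"
    using tendsto_add[OF upper(2) lower(2)] by simp
qed

lemma exp_square_le_chernoff_tails:
  fixes c P r :: real
  assumes c: "0 < c" "c \<le> 1/8" and P: "1 \<le> c * P" and far: "8 * c \<le> \<bar>r\<^sup>2 - 1\<bar>"
  shows "exp (r\<^sup>2) \<le> exp 2 * chernoff_tails c P (P * r\<^sup>2)"
proof -
  have "0 \<le> P" using P c by (cases "0 \<le> P") (use mult_pos_neg[of c P] in auto)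
  have exponents: "c * (P * r\<^sup>2 - P) - 8 * c\<^sup>2 * P = (c * P) * (r\<^sup>2 - 1 - 8 * c)"
    "- c * (P * r\<^sup>2 - P) - 8 * c\<^sup>2 * P = (c * P) * (1 - 8 * c - r\<^sup>2)"
    by (simp_all add: power2_eq_square algebra_simps)
  show ?thesis
  proof (cases "r\<^sup>2 \<ge> 1 + 8 * c")
    case True
    then have "r\<^sup>2 - 1 - 8 * c \<le> (c * P) * (r\<^sup>2 - 1 - 8 * c)"
      using mult_right_mono[OF P, of "r\<^sup>2 - 1 - 8 * c"] by simp
    then have "exp (r\<^sup>2) \<le> exp (2 + (c * P) * (r\<^sup>2 - 1 - 8 * c))"
      using c by simp
    then show ?thesis
      unfolding chernoff_tails_def exponents by (simp add: exp_add distrib_left add_increasing2)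
  next
    case False
    with far have "r\<^sup>2 \<le> 1 - 8 * c" by linarith
    moreover have "0 \<le> (c * P) * (1 - 8 * c - r\<^sup>2)"
      using \<open>0 \<le> P\<close> c calculation by simp
    ultimately have "exp (r\<^sup>2) \<le> exp (2 + (c * P) * (1 - 8 * c - r\<^sup>2))"
      using c by simp
    then show ?thesis
      unfolding chernoff_tails_def exponents by (simp add: exp_add distrib_left add_increasing)
  qed
qed

lemma le_eps_plus_chernoff_tails:
  fixes g :: "real \<Rightarrow> real"
  assumes cont: "isCont g 1" and g1: "g 1 = 0"
    and growth: "\<And>r. 0 \<le> r \<Longrightarrow> g r \<le> K * exp (r\<^sup>2)" and "0 < \<epsilon>"
  obtains c L where "0 < c" "c \<le> 1/8" "0 \<le> L"
    "\<And>P r. 1 \<le> c * P \<Longrightarrow> 0 \<le> r \<Longrightarrow> g r \<le> \<epsilon> + L * chernoff_tails c P (P * r\<^sup>2)"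
proof -
  obtain s where "0 < s" and near: "\<And>r. \<bar>r - 1\<bar> < s \<Longrightarrow> g r < \<epsilon>"
    using cont \<open>0 < \<epsilon>\<close> g1 unfolding continuous_at_eps_delta by (force simp: dist_real_def)
  define c where "c = min s 1 / 8"
  have c: "0 < c" "c \<le> 1/8" "8 * c \<le> s"
    using \<open>0 < s\<close> by (auto simp: c_def)
  have "0 \<le> K"
    using growth[of 1] g1 by (simp add: zero_le_mult_iff)
  have "g r \<le> \<epsilon> + K * exp 2 * chernoff_tails c P (P * r\<^sup>2)" if P: "1 \<le> c * P" and "0 \<le> r" for P r
  proof (cases "\<bar>r\<^sup>2 - 1\<bar> < 8 * c")
    case True
    have "\<bar>r - 1\<bar> * 1 \<le> \<bar>r - 1\<bar> * (r + 1)"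
      using \<open>0 \<le> r\<close> by (intro mult_left_mono) auto
    also have "\<dots> = \<bar>(r - 1) * (r + 1)\<bar>"
      using \<open>0 \<le> r\<close> by (simp add: abs_mult)
    also have "\<dots> = \<bar>r\<^sup>2 - 1\<bar>"
      by (simp add: power2_eq_square algebra_simps)
    finally have "g r < \<epsilon>"
      using True c by (intro near) simp
    moreover have "0 \<le> K * exp 2 * chernoff_tails c P (P * r\<^sup>2)"
      using \<open>0 \<le> K\<close> by (simp add: chernoff_tails_def)
    ultimately show ?thesis by linarith
  next
    case False
    then have "exp (r\<^sup>2) \<le> exp 2 * chernoff_tails c P (P * r\<^sup>2)"
      using c P by (intro exp_square_le_chernoff_tails) auto
    then have "g r \<le> K * exp 2 * chernoff_tails c P (P * r\<^sup>2)"
      using growth[OF \<open>0 \<le> r\<close>] mult_left_mono[OF _ \<open>0 \<le> K\<close>] by (fastforce simp: mult.assoc)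
    then show ?thesis using \<open>0 < \<epsilon>\<close> by linarith
  qed
  then show thesis
    using c \<open>0 \<le> K\<close> by (intro that[of c "K * exp 2"]) auto
qed

lemma (in prob_space) expectation_root_mean_square_le:
  fixes X :: "nat \<Rightarrow> 'a \<Rightarrow> real" and g :: "real \<Rightarrow> real" and c \<epsilon> L :: real and P :: nat
  assumes indep: "indep_vars (\<lambda>_. borel) X UNIV"
    and gauss: "\<And>i. distributed M lborel (X i) \<rho>"
    and c: "0 < c" "c \<le> 1/8" and "0 \<le> \<epsilon>" "0 \<le> L" and P: "1 \<le> c * P"
    and bound: "\<And>r::real. 0 \<le> r \<Longrightarrow> g r \<le> \<epsilon> + L * chernoff_tails c P (P * r\<^sup>2)"
  shows "expectation (\<lambda>\<omega>. g (sqrt (\<Sum>i<P. (X i \<omega>)\<^sup>2) / sqrt P))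
    \<le> \<epsilon> + L * expectation (\<lambda>\<omega>. chernoff_tails c P (\<Sum>i<P. (X i \<omega>)\<^sup>2))"
proof -
  define S where "S \<omega> = (\<Sum>i<P. (X i \<omega>)\<^sup>2)" for \<omega>
  note integrable_tails = chernoff_tails_sum_squares(1)[OF indep gauss c, of P, folded S_def]
  have "0 < P" using P by (cases "P = 0") auto
  have "g (sqrt (S \<omega>) / sqrt P) \<le> \<epsilon> + L * chernoff_tails c P (S \<omega>)" for \<omega>
  proof -
    have "S \<omega> = P * (sqrt (S \<omega>) / sqrt P)\<^sup>2"
      using \<open>0 < P\<close> by (simp add: S_def power_divide sum_nonneg)
    moreover have "0 \<le> sqrt (S \<omega>) / sqrt P"
      by (simp add: S_def sum_nonneg)
    ultimately show ?thesis
      using bound by metis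
  qed
  moreover have "integrable M (\<lambda>\<omega>. \<epsilon> + L * chernoff_tails c P (S \<omega>))"
    using integrable_tails by (intro Bochner_Integration.integrable_add integrable_mult_right) auto
  moreover have "0 \<le> \<epsilon> + L * chernoff_tails c P (S \<omega>)" for \<omega>
    using \<open>0 \<le> \<epsilon>\<close> \<open>0 \<le> L\<close> by (simp add: chernoff_tails_def)
  ultimately have "expectation (\<lambda>\<omega>. g (sqrt (S \<omega>) / sqrt P))
      \<le> expectation (\<lambda>\<omega>. \<epsilon> + L * chernoff_tails c P (S \<omega>))"
    by (intro integral_mono')
  also have "\<dots> = \<epsilon> + L * expectation (\<lambda>\<omega>. chernoff_tails c P (S \<omega>))"
    using integrable_tails by (simp add: prob_space)
  finally show ?thesis by (simp add: S_def)
qed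

lemma (in prob_space) tendsto_expectation_root_mean_square:
  fixes X :: "nat \<Rightarrow> 'a \<Rightarrow> real" and g :: "real \<Rightarrow> real"
  assumes indep: "indep_vars (\<lambda>_. borel) X UNIV"
    and gauss: "\<And>i. distributed M lborel (X i) \<rho>"
    and nonneg: "\<And>r. 0 \<le> r \<Longrightarrow> 0 \<le> g r"
    and cont: "isCont g 1" and g1: "g 1 = 0"
    and growth: "\<And>r. 0 \<le> r \<Longrightarrow> g r \<le> K * exp (r\<^sup>2)"
  shows "(\<lambda>P. expectation (\<lambda>\<omega>. g (sqrt (\<Sum>i<P. (X i \<omega>)\<^sup>2) / sqrt (real P)))) \<longlonglongrightarrow> 0"
proof (rule order_tendstoI)
  fix a :: real
  assume "a < 0"
  have "0 \<le> expectation (\<lambda>\<omega>. g (sqrt (\<Sum>i<P. (X i \<omega>)\<^sup>2) / sqrt (real P)))" for P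
    by (intro integral_nonneg_AE AE_I2 nonneg) (simp add: sum_nonneg)
  with \<open>a < 0\<close> show "eventually (\<lambda>P. a < expectation (\<lambda>\<omega>. g (sqrt (\<Sum>i<P. (X i \<omega>)\<^sup>2) / sqrt (real P)))) sequentially"
    by (intro always_eventually allI) (rule order.strict_trans2)
next
  fix a :: real
  assume "0 < a"
  then obtain c L where c: "0 < c" "c \<le> 1/8" and "0 \<le> L"
    and bound: "\<And>P r. 1 \<le> c * P \<Longrightarrow> 0 \<le> r \<Longrightarrow> g r \<le> a/2 + L * chernoff_tails c P (P * r\<^sup>2)"
    using le_eps_plus_chernoff_tails[OF cont g1 growth, of "a/2"] by auto
  have "(\<lambda>P. L * expectation (\<lambda>\<omega>. chernoff_tails c P (\<Sum>i<P. (X i \<omega>)\<^sup>2))) \<longlonglongrightarrow> L * 0"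
    using chernoff_tails_sum_squares(2)[OF indep gauss c] by (rule tendsto_mult_left)
  then have "eventually (\<lambda>P. L * expectation (\<lambda>\<omega>. chernoff_tails c P (\<Sum>i<P. (X i \<omega>)\<^sup>2)) < a/2) sequentially"
    using \<open>0 < a\<close> by (intro order_tendstoD) auto
  moreover have "eventually (\<lambda>P. 1/c \<le> real P) sequentially"
    using filterlim_real_sequentially by (simp add: filterlim_at_top)
  ultimately show "eventually (\<lambda>P. expectation (\<lambda>\<omega>. g (sqrt (\<Sum>i<P. (X i \<omega>)\<^sup>2) / sqrt (real P))) < a) sequentially"
  proof eventually_elim
    case (elim P)
    then have "1 \<le> c * P" using c by (simp add: field_simps)
    with elim show ?case
      using expectation_root_mean_square_le[OF indep gauss c _ \<open>0 \<le> L\<close> _ bound, of P] \<open>0 < a\<close>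
      by fastforce
  qed
qed

lemma null_sets_discont_mono_scaled:
  fixes \<phi> :: "real \<Rightarrow> real"
  assumes "mono \<phi>" and "r \<noteq> 0"
  shows "{z. \<not> isCont \<phi> (r * z)} \<in> null_sets lborel"
proof -
  have "{z. \<not> isCont \<phi> (r * z)} \<subseteq> (\<lambda>a. a / r) ` {a. \<not> isCont \<phi> a}"
  proof
    fix z
    assume "z \<in> {z. \<not> isCont \<phi> (r * z)}"
    then show "z \<in> (\<lambda>a. a / r) ` {a. \<not> isCont \<phi> a}"
      using \<open>r \<noteq> 0\<close> by (intro image_eqI[of _ _ "r * z"]) auto
  qed
  then show ?thesis
    by (rule countable_imp_null_set_lborel[OF countable_subset[OF _ countable_image]])
      (rule mono_ctble_discont[OF \<open>mono \<phi>\<close>])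
qed

definition scaled_gauss_moment :: "(real \<Rightarrow> real) \<Rightarrow> real \<Rightarrow> real" where
  "scaled_gauss_moment \<phi> r = gauss_int (\<lambda>z. z * \<phi> (r * z))"

locale mono_poly_bounded =
  fixes \<phi> :: "real \<Rightarrow> real" and A B :: real and n :: nat
  assumes nonneg: "\<And>x. 0 \<le> \<phi> x"
    and mono: "mono \<phi>"
    and bound: "\<And>v. \<phi> v \<le> A + B * v^(2*n)"
    and B_nonneg: "0 \<le> B"
begin

lemma borel_measurable_phi [measurable]: "\<phi> \<in> borel_measurable borel"
  using mono by (rule borel_measurable_mono)

lemma norm_scaled_integrand_le:
  assumes "\<bar>r\<bar> \<le> R"
  shows "norm (\<rho> z * (z * \<phi> (r * z))) \<le> \<rho> z * (A * \<bar>z\<bar> + B * R^(2*n) * \<bar>z\<bar>^(2*n+1))"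
proof -
  have "r^(2*n) \<le> R^(2*n)"
    using power_mono[OF assms, of "2*n"] by (simp add: power_even_abs)
  then have "(r * z)^(2*n) \<le> R^(2*n) * z^(2*n)"
    unfolding power_mult_distrib by (rule mult_right_mono) (simp add: zero_le_even_power)
  then have "\<phi> (r * z) \<le> A + B * R^(2*n) * z^(2*n)"
    using bound[of "r * z"] mult_left_mono[OF _ B_nonneg] by (fastforce simp: mult.assoc)
  have "norm (\<rho> z * (z * \<phi> (r * z))) = \<rho> z * (\<bar>z\<bar> * \<phi> (r * z))"
    using nonneg[of "r * z"] by (simp add: abs_mult)
  also have "\<dots> \<le> \<rho> z * (\<bar>z\<bar> * (A + B * R^(2*n) * z^(2*n)))"
    using \<open>\<phi> (r * z) \<le> _\<close> by (intro mult_left_mono) auto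
  also have "\<bar>z\<bar> * (A + B * R^(2*n) * z^(2*n)) = A * \<bar>z\<bar> + B * R^(2*n) * \<bar>z\<bar>^(2*n+1)"
  proof -
    have "\<bar>z\<bar>^(2*n) = z^(2*n)" by (rule power_even_abs) simp
    then show ?thesis by (simp add: algebra_simps)
  qed
  finally show ?thesis .
qed

lemma has_bochner_integral_dominator:
  "has_bochner_integral lborel (\<lambda>z. \<rho> z * (A * \<bar>z\<bar> + B * R^(2*n) * \<bar>z\<bar>^(2*n+1)))
     (sqrt (2/pi) * (A + B * R^(2*n) * 2^n * fact n))"
  using has_bochner_integral_add[OF
      has_bochner_integral_mult_right[OF std_normal_moment_abs_odd[of 0], of A]
      has_bochner_integral_mult_right[OF std_normal_moment_abs_odd[of n], of "B * R^(2*n)"]]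
  by (simp add: algebra_simps)

lemma integrable_scaled_integrand: "integrable lborel (\<lambda>z. \<rho> z * (z * \<phi> (r * z)))"
proof (rule Bochner_Integration.integrable_bound)
  show "integrable lborel (\<lambda>z. \<rho> z * (A * \<bar>z\<bar> + B * \<bar>r\<bar>^(2*n) * \<bar>z\<bar>^(2*n+1)))"
    using has_bochner_integral_dominator by (rule integrable.intros)
  show "AE z in lborel. norm (\<rho> z * (z * \<phi> (r * z)))
      \<le> norm (\<rho> z * (A * \<bar>z\<bar> + B * \<bar>r\<bar>^(2*n) * \<bar>z\<bar>^(2*n+1)))"
    using norm_scaled_integrand_le[of r "\<bar>r\<bar>", OF order_refl]
    by (intro AE_I2) (metis abs_ge_self order_trans real_norm_def)
qed measurable

lemma abs_scaled_gauss_moment_le: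
  "\<bar>scaled_gauss_moment \<phi> r\<bar> \<le> sqrt (2/pi) * (A + B * r^(2*n) * 2^n * fact n)"
proof -
  have "\<bar>scaled_gauss_moment \<phi> r\<bar> = norm (integral\<^sup>L lborel (\<lambda>z. \<rho> z * (z * \<phi> (r * z))))"
    by (simp add: scaled_gauss_moment_def gauss_int_def)
  also have "\<dots> \<le> integral\<^sup>L lborel (\<lambda>z. \<rho> z * (A * \<bar>z\<bar> + B * \<bar>r\<bar>^(2*n) * \<bar>z\<bar>^(2*n+1)))"
    by (rule Bochner_Integration.integral_norm_bound_integral[OF integrable_scaled_integrand
        integrable.intros[OF has_bochner_integral_dominator]]) (rule norm_scaled_integrand_le, simp)
  also have "\<dots> = sqrt (2/pi) * (A + B * \<bar>r\<bar>^(2*n) * 2^n * fact n)"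
    using has_bochner_integral_dominator by (simp add: has_bochner_integral_iff)
  finally show ?thesis by (simp add: power_even_abs)
qed

lemma isCont_scaled_gauss_moment:
  assumes "r \<noteq> 0"
  shows "isCont (scaled_gauss_moment \<phi>) r"
proof (rule continuous_at_sequentiallyI)
  fix u :: "nat \<Rightarrow> real"
  assume u: "u \<longlonglongrightarrow> r"
  have "eventually (\<lambda>k. \<bar>u k\<bar> \<le> \<bar>r\<bar> + 1) sequentially"
    using tendstoD[OF u zero_less_one]
    by eventually_elim (use abs_triangle_ineq2[of "u _" r] in \<open>simp add: dist_real_def\<close>)
  then obtain N where N: "\<And>k. k \<ge> N \<Longrightarrow> \<bar>u k\<bar> \<le> \<bar>r\<bar> + 1"
    by (auto simp: eventually_sequentially)
  have null: "{z. \<not> isCont \<phi> (r * z)} \<in> null_sets lborel"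
    using mono assms by (rule null_sets_discont_mono_scaled)
  have "(\<lambda>k. integral\<^sup>L lborel (\<lambda>z. \<rho> z * (z * \<phi> (u (k + N) * z))))
      \<longlonglongrightarrow> integral\<^sup>L lborel (\<lambda>z. \<rho> z * (z * \<phi> (r * z)))"
  proof (rule integral_dominated_convergence)
    show "integrable lborel (\<lambda>z. \<rho> z * (A * \<bar>z\<bar> + B * (\<bar>r\<bar> + 1)^(2*n) * \<bar>z\<bar>^(2*n+1)))"
      using has_bochner_integral_dominator by (rule integrable.intros)
    show "AE z in lborel. norm (\<rho> z * (z * \<phi> (u (k + N) * z)))
        \<le> \<rho> z * (A * \<bar>z\<bar> + B * (\<bar>r\<bar> + 1)^(2*n) * \<bar>z\<bar>^(2*n+1))" for k
      using N[of "k + N"] by (intro AE_I2 norm_scaled_integrand_le) simp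
    have "(\<lambda>k. \<rho> z * (z * \<phi> (u (k + N) * z))) \<longlonglongrightarrow> \<rho> z * (z * \<phi> (r * z))"
      if "isCont \<phi> (r * z)" for z
    proof -
      have "(\<lambda>k. u (k + N) * z) \<longlonglongrightarrow> r * z"
        using LIMSEQ_ignore_initial_segment[OF u] by (intro tendsto_mult_right)
      with that show ?thesis
        by (intro tendsto_mult_left isCont_tendsto_compose[of _ \<phi>])
    qed
    then show "AE z in lborel. (\<lambda>k. \<rho> z * (z * \<phi> (u (k + N) * z))) \<longlonglongrightarrow> \<rho> z * (z * \<phi> (r * z))"
      by (intro AE_I'[OF null]) auto
  qed measurable
  then show "(\<lambda>k. scaled_gauss_moment \<phi> (u k)) \<longlonglongrightarrow> scaled_gauss_moment \<phi> r"
    unfolding scaled_gauss_moment_def gauss_int_def by (rule LIMSEQ_offset)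
qed

end

definition estimate_sq_error :: "(real \<Rightarrow> real) \<Rightarrow> real \<Rightarrow> real" where
  "estimate_sq_error \<phi> r = (m_phi \<phi> * scaled_gauss_moment \<phi> r - r)\<^sup>2"

context mono_poly_bounded
begin

lemma estimate_sq_error_one:
  assumes "\<exists>x y. \<phi> x \<noteq> \<phi> y"
  shows "estimate_sq_error \<phi> 1 = 0"
proof -
  have "0 < scaled_gauss_moment \<phi> 1"
    using gauss_int_mult_mono_pos[OF mono assms] integrable_scaled_integrand[of 1]
    by (simp add: scaled_gauss_moment_def)
  then show ?thesis
    by (simp add: estimate_sq_error_def m_phi_def scaled_gauss_moment_def)
qed

lemma isCont_estimate_sq_error: "isCont (estimate_sq_error \<phi>) 1"
  unfolding estimate_sq_error_def[abs_def]
  by (intro continuous_intros isCont_scaled_gauss_moment) simp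

lemma abs_scaled_gauss_moment_le_exp:
  "\<bar>scaled_gauss_moment \<phi> r\<bar> \<le> sqrt (2/pi) * (\<bar>A\<bar> + B * (2^n * fact n)\<^sup>2) * exp (r\<^sup>2 / 2)"
proof -
  define e where "e = exp (r\<^sup>2 / 2)"
  have "1 \<le> e" by (simp add: e_def)
  have "r^(2*n) = 2^n * (r\<^sup>2 / 2)^n"
    by (simp only: power_mult_distrib[symmetric]) (simp add: power_mult)
  also have "\<dots> \<le> 2^n * (fact n * e)"
    by (rule mult_left_mono) (simp_all add: e_def power_le_fact_mult_exp)
  finally have "B * r^(2*n) * (2^n * fact n) \<le> B * (2^n * (fact n * e)) * (2^n * fact n)"
    using B_nonneg by (intro mult_left_mono mult_right_mono) simp_all
  moreover have "A \<le> \<bar>A\<bar> * e"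
    using mult_left_mono[OF \<open>1 \<le> e\<close> abs_ge_zero[of A]] abs_ge_self[of A] by linarith
  ultimately have "A + B * r^(2*n) * 2^n * fact n \<le> (\<bar>A\<bar> + B * (2^n * fact n)\<^sup>2) * e"
    by (simp add: power2_eq_square algebra_simps)
  then show ?thesis
    using order_trans[OF abs_scaled_gauss_moment_le mult_left_mono] by (simp add: e_def mult.assoc)
qed

lemma estimate_sq_error_le_exp:
  obtains K where "\<And>r. 0 \<le> r \<Longrightarrow> estimate_sq_error \<phi> r \<le> K * exp (r\<^sup>2)"
proof -
  define c where "c = sqrt (2/pi) * (\<bar>A\<bar> + B * (2^n * fact n)\<^sup>2)"
  define K where "K = \<bar>m_phi \<phi>\<bar> * c + 1"
  have "estimate_sq_error \<phi> r \<le> K\<^sup>2 * exp (r\<^sup>2)" if "0 \<le> r" for r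
  proof -
    have "\<bar>m_phi \<phi> * scaled_gauss_moment \<phi> r - r\<bar> \<le> \<bar>m_phi \<phi>\<bar> * \<bar>scaled_gauss_moment \<phi> r\<bar> + r"
      using abs_triangle_ineq4[of "m_phi \<phi> * scaled_gauss_moment \<phi> r" r] that by (simp add: abs_mult)
    also have "\<dots> \<le> \<bar>m_phi \<phi>\<bar> * (c * exp (r\<^sup>2 / 2)) + exp (r\<^sup>2 / 2)"
      using abs_scaled_gauss_moment_le_exp[of r] le_exp_half_square[of r]
      by (intro add_mono mult_left_mono) (auto simp: c_def)
    also have "\<dots> = K * exp (r\<^sup>2 / 2)"
      by (simp add: K_def algebra_simps)
    finally have "\<bar>m_phi \<phi> * scaled_gauss_moment \<phi> r - r\<bar>\<^sup>2 \<le> (K * exp (r\<^sup>2 / 2))\<^sup>2"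
      by (rule power_mono) simp
    also have "(K * exp (r\<^sup>2 / 2))\<^sup>2 = K\<^sup>2 * exp (r\<^sup>2)"
      by (simp add: power_mult_distrib exp_double[symmetric])
    finally show ?thesis
      by (simp add: estimate_sq_error_def)
  qed
  then show thesis by (rule that)
qed

end

theorem lemma3:
  fixes \<phi> :: "real \<Rightarrow> real"
    and M :: "'a measure"
    and X :: "nat \<Rightarrow> 'a \<Rightarrow> real"
  assumes nonneg: "\<And>x. \<phi> x \<ge> 0"
    and nonconst: "\<exists>x y. \<phi> x \<noteq> \<phi> y"
    and mono: "mono \<phi>"
    and growth: "\<exists>\<alpha>\<ge>0. \<exists>C. eventually (\<lambda>v. \<phi> v / \<bar>v\<bar> powr \<alpha> \<le> C) at_top"
    and prob: "prob_space M"
    and indep: "prob_space.indep_vars M (\<lambda>_. borel) X UNIV"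
    and gauss: "\<And>i. distributed M lborel (X i) std_normal_density"
  shows "(\<lambda>P. prob_space.expectation M (\<lambda>\<omega>.
            (m_phi \<phi> * gauss_int (\<lambda>z. z * \<phi> (sqrt (\<Sum>i<P. (X i \<omega>)\<^sup>2) / sqrt (real P) * z))
             - sqrt (\<Sum>i<P. (X i \<omega>)\<^sup>2) / sqrt (real P))\<^sup>2))
         \<longlonglongrightarrow> 0"
proof -
  obtain \<alpha> C where "eventually (\<lambda>v. \<phi> v / \<bar>v\<bar> powr \<alpha> \<le> C) at_top"
    using growth by blast
  then obtain A B n where "0 \<le> B" "\<And>v. \<phi> v \<le> A + B * v^(2*n)"
    using mono_polynomial_growth_bound[OF mono] by blast
  then interpret mono_poly_bounded \<phi> A B n
    using nonneg mono by unfold_locales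
  obtain K where K: "\<And>r. 0 \<le> r \<Longrightarrow> estimate_sq_error \<phi> r \<le> K * exp (r\<^sup>2)"
    using estimate_sq_error_le_exp by blast
  interpret prob_space M
    by (rule prob)
  have "(\<lambda>P. expectation (\<lambda>\<omega>. estimate_sq_error \<phi> (sqrt (\<Sum>i<P. (X i \<omega>)\<^sup>2) / sqrt (real P)))) \<longlonglongrightarrow> 0"
    by (rule tendsto_expectation_root_mean_square[OF indep gauss _ isCont_estimate_sq_error
          estimate_sq_error_one[OF nonconst] K]) (simp add: estimate_sq_error_def)
  then show ?thesis
    by (simp add: estimate_sq_error_def scaled_gauss_moment_def)
qed

end
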